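(* Let $m\ge1$ and let $u,v,p,q\in\mathbb{R}[x,y,z,w]$ be homogeneous of degree $m$ with $yp=zv$ and $yq=wv$. Define polynomials $U,V,P,Q$ by the quaternion identity $$U+\mathbf{i}V+\mathbf{j}P+\mathbf{k}Q=(x+\mathbf{i}y+\mathbf{j}z+\mathbf{k}w)(u+\mathbf{i}v+\mathbf{j}p+\mathbf{k}q),$$ and let $\Phi=(U,V,P,Q):\mathbb{R}^4\to\mathbb{R}^4$. Then at every point with $y\neq0$, $$|J(\Phi)|=\frac{(m+1)V^2\left[\,y(x^2+y^2+z^2+w^2)(v u_x-u v_x)+y^2u^2+v^2(y^2+z^2+w^2)\,\right]}{y^4}.$$
   Context: $\mathbb{H}$ is the real quaternion algebra with basis $1,\mathbf{i},\mathbf{j},\mathbf{k}$, $\mathbf{i}^2=\mathbf{j}^2=\mathbf{k}^2=-1$, $\mathbf{ij}=-\mathbf{ji}=\mathbf{k}$, $\mathbf{jk}=-\mathbf{kj}=\mathbf{i}$, $\mathbf{ki}=-\mathbf{ik}=\mathbf{j}$. For $F=(F_1,\dots,F_4):\mathbb{R}^4\to\mathbb{R}^4$ in variables $(x,y,z,w)$, $J(F)=[\partial F_i/\partial x_j]$ and $|J(F)|$ is its determinant; subscripts denote partial derivatives. *)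

theory Defs
  imports "HOL-Analysis.Analysis"
begin

definition xc :: "real^4 \<Rightarrow> real" where "xc P = P $ 1"
definition yc :: "real^4 \<Rightarrow> real" where "yc P = P $ 2"
definition zc :: "real^4 \<Rightarrow> real" where "zc P = P $ 3"
definition wc :: "real^4 \<Rightarrow> real" where "wc P = P $ 4"

definition hom_poly4 :: "nat \<Rightarrow> (real^4 \<Rightarrow> real) \<Rightarrow> bool" where
  "hom_poly4 m f \<longleftrightarrow> (\<exists>coef :: nat \<Rightarrow> nat \<Rightarrow> nat \<Rightarrow> nat \<Rightarrow> real.
     \<forall>P. f P = (\<Sum>a\<le>m. \<Sum>b\<le>m. \<Sum>c\<le>m. \<Sum>d\<le>m.
        if a + b + c + d = m
        then coef a b c d * xc P ^ a * yc P ^ b * zc P ^ c * wc P ^ d else 0))"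

text \<open>Hamilton product of quaternions a0 + i a1 + j a2 + k a3, represented as 4-tuples
(real part, i-, j-, k-components), following i^2=j^2=k^2=-1, ij=-ji=k, jk=-kj=i, ki=-ik=j.\<close>

definition qmult :: "real \<times> real \<times> real \<times> real \<Rightarrow> real \<times> real \<times> real \<times> real
                     \<Rightarrow> real \<times> real \<times> real \<times> real" where
  "qmult = (\<lambda>(a0,a1,a2,a3) (b0,b1,b2,b3).
     (a0*b0 - a1*b1 - a2*b2 - a3*b3,
      a0*b1 + a1*b0 + a2*b3 - a3*b2,
      a0*b2 - a1*b3 + a2*b0 + a3*b1,
      a0*b3 + a1*b2 - a2*b1 + a3*b0))"

definition partial :: "(real^4 \<Rightarrow> real) \<Rightarrow> 4 \<Rightarrow> real^4 \<Rightarrow> real" where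
  "partial f j P = deriv (\<lambda>t. f (P + t *\<^sub>R axis j 1)) 0"

definition jacobian4 :: "(real^4 \<Rightarrow> real^4) \<Rightarrow> real^4 \<Rightarrow> real^4^4" where
  "jacobian4 F P = (\<chi> i j. partial (\<lambda>Q. F Q $ i) j P)"

end

theory Submission
  imports Defs
begin

text \<open>The constraints give p = z v / y and q = w v / y, so the quaternion product satisfies
  P = (z / y) V and Q = (w / y) V. Hence the last two rows of the Jacobian are z/y and w/y times
  its second row plus V times the gradients of z/y and w/y, which are sparse; this produces the
  factor V^2. In the remaining determinant the y-derivatives of U and V are eliminated by Euler's
  identity, since U and V are homogeneous of degree m + 1, and it collapses to
  (m + 1) (U_x V - V_x U) / y^3.\<close>

lemma det_4:
  "det (A::'a::comm_ring_1^4^4) =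
      A$1$1*A$2$2*A$3$3*A$4$4 - A$1$1*A$2$2*A$3$4*A$4$3 - A$1$1*A$2$3*A$3$2*A$4$4
    + A$1$1*A$2$3*A$3$4*A$4$2 + A$1$1*A$2$4*A$3$2*A$4$3 - A$1$1*A$2$4*A$3$3*A$4$2
    - A$1$2*A$2$1*A$3$3*A$4$4 + A$1$2*A$2$1*A$3$4*A$4$3 + A$1$2*A$2$3*A$3$1*A$4$4
    - A$1$2*A$2$3*A$3$4*A$4$1 - A$1$2*A$2$4*A$3$1*A$4$3 + A$1$2*A$2$4*A$3$3*A$4$1
    + A$1$3*A$2$1*A$3$2*A$4$4 - A$1$3*A$2$1*A$3$4*A$4$2 - A$1$3*A$2$2*A$3$1*A$4$4
    + A$1$3*A$2$2*A$3$4*A$4$1 + A$1$3*A$2$4*A$3$1*A$4$2 - A$1$3*A$2$4*A$3$2*A$4$1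
    - A$1$4*A$2$1*A$3$2*A$4$3 + A$1$4*A$2$1*A$3$3*A$4$2 + A$1$4*A$2$2*A$3$1*A$4$3
    - A$1$4*A$2$2*A$3$3*A$4$1 - A$1$4*A$2$3*A$3$1*A$4$2 + A$1$4*A$2$3*A$3$2*A$4$1"
proof -
  have f1234: "finite {2::4, 3, 4}" "1 \<notin> {2::4, 3, 4}" by auto
  have f234: "finite {3::4, 4}" "2 \<notin> {3::4, 4}" by auto
  have f34: "finite {4::4}" "3 \<notin> {4::4}" by auto
  show ?thesis
    unfolding det_def UNIV_4
    unfolding sum_over_permutations_insert[OF f1234]
    unfolding sum_over_permutations_insert[OF f234]
    unfolding sum_over_permutations_insert[OF f34]
    unfolding permutes_sing
    by (simp add: sign_swap_id permutation_swap_id sign_compose permutation_compose sign_id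
        swap_id_eq algebra_simps)
qed

lemma det4_row_reduction:
  fixes A :: "real^4^4"
  assumes "y \<noteq> 0"
    and "A$3$1 = s * A$2$1" "A$3$2 = s * A$2$2 - V * z / y^2"
        "A$3$3 = s * A$2$3 + V / y" "A$3$4 = s * A$2$4"
    and "A$4$1 = t * A$2$1" "A$4$2 = t * A$2$2 - V * w / y^2"
        "A$4$3 = t * A$2$3" "A$4$4 = t * A$2$4 + V / y"
    and "x * A$1$1 + y * A$1$2 + z * A$1$3 + w * A$1$4 = k * U"
        "x * A$2$1 + y * A$2$2 + z * A$2$3 + w * A$2$4 = k * V"
  shows "det A = k * V^2 * (A$1$1 * V - A$2$1 * U) / y^3"
proof -
  have a12: "A$1$2 = (k * U - x * A$1$1 - z * A$1$3 - w * A$1$4) / y"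
   and a22: "A$2$2 = (k * V - x * A$2$1 - z * A$2$3 - w * A$2$4) / y"
    using assms by (simp_all add: field_simps)
  show ?thesis
    unfolding det_4 assms(2-9) a12 a22 using assms(1)
    by (simp add: field_simps) algebra
qed

lemma det_quaternion_product_jacobian:
  fixes A :: "real^4^4" and du dv dp dq :: "4 \<Rightarrow> real"
  assumes y: "y \<noteq> 0"
    and pv: "y * p = z * v" and qv: "y * q = w * v"
    and dpv: "\<And>j. y * dp j + axis j 1 $ 2 * p = z * dv j + axis j 1 $ 3 * v"
    and dqv: "\<And>j. y * dq j + axis j 1 $ 2 * q = w * dv j + axis j 1 $ 4 * v"
    and euler_u: "x * du 1 + y * du 2 + z * du 3 + w * du 4 = m * u"
    and euler_v: "x * dv 1 + y * dv 2 + z * dv 3 + w * dv 4 = m * v"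
    and rows:
      "\<And>j. A$1$j = (x * du j + axis j 1 $ 1 * u) - (y * dv j + axis j 1 $ 2 * v)
                   - (z * dp j + axis j 1 $ 3 * p) - (w * dq j + axis j 1 $ 4 * q)"
      "\<And>j. A$2$j = (x * dv j + axis j 1 $ 1 * v) + (y * du j + axis j 1 $ 2 * u)
                   + (z * dq j + axis j 1 $ 3 * q) - (w * dp j + axis j 1 $ 4 * p)"
      "\<And>j. A$3$j = (x * dp j + axis j 1 $ 1 * p) - (y * dq j + axis j 1 $ 2 * q)
                   + (z * du j + axis j 1 $ 3 * u) + (w * dv j + axis j 1 $ 4 * v)"
      "\<And>j. A$4$j = (x * dq j + axis j 1 $ 1 * q) + (y * dp j + axis j 1 $ 2 * p)
                   - (z * dv j + axis j 1 $ 3 * v) + (w * du j + axis j 1 $ 4 * u)"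
  shows "det A = (m + 1) * (x * v + y * u + z * q - w * p)^2
    * (y * (x^2 + y^2 + z^2 + w^2) * (v * du 1 - u * dv 1) + y^2 * u^2 + v^2 * (y^2 + z^2 + w^2))
    / y^4"
proof -
  define U where "U = x * u - y * v - z * p - w * q"
  define V where "V = x * v + y * u + z * q - w * p"
  have p: "p = z * v / y" and q: "q = w * v / y"
    using pv qv y by (simp_all add: field_simps)
  have dp: "\<And>j. dp j = (z * dv j + axis j 1 $ 3 * v - axis j 1 $ 2 * p) / y"
   and dq: "\<And>j. dq j = (w * dv j + axis j 1 $ 4 * v - axis j 1 $ 2 * q) / y"
    using dpv dqv y by (simp_all add: field_simps)
  have row3: "\<And>j. A$3$j = z/y * A$2$j + V * (axis j 1 $ 3 / y - z * axis j 1 $ 2 / y^2)"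
   and row4: "\<And>j. A$4$j = w/y * A$2$j + V * (axis j 1 $ 4 / y - w * axis j 1 $ 2 / y^2)"
    unfolding rows dp dq V_def p q using y by (simp_all add: field_simps power2_eq_square)
  have du2: "du 2 = (m * u - x * du 1 - z * du 3 - w * du 4) / y"
   and dv2: "dv 2 = (m * v - x * dv 1 - z * dv 3 - w * dv 4) / y"
    using euler_u euler_v y by (simp_all add: field_simps)
  have euler_row1: "x * A$1$1 + y * A$1$2 + z * A$1$3 + w * A$1$4 = (m + 1) * U"
   and euler_row2: "x * A$2$1 + y * A$2$2 + z * A$2$3 + w * A$2$4 = (m + 1) * V"
    unfolding rows dp dq p q U_def V_def du2 dv2 using y
    by (simp_all add: axis_def field_simps; simp add: algebra_simps)+
  have "A$1$1 * V - A$2$1 * U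
      = (y * (x^2 + y^2 + z^2 + w^2) * (v * du 1 - u * dv 1)
         + y^2 * u^2 + v^2 * (y^2 + z^2 + w^2)) / y"
    unfolding rows dp dq p q U_def V_def using y
    by (simp add: axis_def field_simps power2_eq_square; simp add: algebra_simps)
  moreover have "det A = (m + 1) * V^2 * (A$1$1 * V - A$2$1 * U) / y^3"
    by (rule det4_row_reduction[where s = "z / y" and t = "w / y", OF y _ _ _ _ _ _ _ _
          euler_row1 euler_row2]) (simp_all add: row3 row4 axis_def)
  ultimately show ?thesis
    using y by (simp add: V_def power_Suc[symmetric] mult.commute)
qed

lemma partial_eq_derivative:
  assumes "(f has_derivative D) (at X)"
  shows "partial f j X = D (axis j 1)"
proof -
  have "((\<lambda>t. X + t *\<^sub>R axis j 1) has_derivative (\<lambda>t. t *\<^sub>R axis j 1)) (at 0)"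
    by (auto intro!: derivative_eq_intros)
  moreover have "(f has_derivative D) (at (X + 0 *\<^sub>R axis j 1))"
    using assms by simp
  ultimately have "((f \<circ> (\<lambda>t. X + t *\<^sub>R axis j 1))
      has_derivative (D \<circ> (\<lambda>t. t *\<^sub>R axis j 1))) (at 0)"
    by (rule diff_chain_at)
  moreover have "D \<circ> (\<lambda>t. t *\<^sub>R axis j 1) = (\<lambda>t. D (axis j 1) * t)"
    using has_derivative_bounded_linear[OF assms]
    by (auto simp: fun_eq_iff linear_simps(5) bounded_linear.linear)
  ultimately have "((\<lambda>t. f (X + t *\<^sub>R axis j 1)) has_field_derivative D (axis j 1)) (at 0)"
    by (simp add: has_field_derivative_def o_def)
  then show ?thesis
    unfolding partial_def by (rule DERIV_imp_deriv)
qed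

lemma partial_add:
  assumes "f differentiable at X" and "g differentiable at X"
  shows "partial (\<lambda>Y. f Y + g Y) j X = partial f j X + partial g j X"
proof -
  obtain Df Dg where f: "(f has_derivative Df) (at X)" and g: "(g has_derivative Dg) (at X)"
    using assms by (auto simp: differentiable_def)
  show ?thesis
    using partial_eq_derivative[OF has_derivative_add[OF f g]]
    by (simp add: partial_eq_derivative[OF f] partial_eq_derivative[OF g])
qed

lemma partial_diff:
  assumes "f differentiable at X" and "g differentiable at X"
  shows "partial (\<lambda>Y. f Y - g Y) j X = partial f j X - partial g j X"
proof -
  obtain Df Dg where f: "(f has_derivative Df) (at X)" and g: "(g has_derivative Dg) (at X)"
    using assms by (auto simp: differentiable_def)
  show ?thesis
    using partial_eq_derivative[OF has_derivative_diff[OF f g]]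
    by (simp add: partial_eq_derivative[OF f] partial_eq_derivative[OF g])
qed

lemma differentiable_component: "(\<lambda>Y :: real^'n. Y $ i) differentiable F"
  by (rule bounded_linear_imp_differentiable[OF bounded_linear_vec_nth])

lemma partial_component_mult:
  assumes "f differentiable at X"
  shows "partial (\<lambda>Y. Y $ i * f Y) j X = X $ i * partial f j X + axis j 1 $ i * f X"
proof -
  obtain D where f: "(f has_derivative D) (at X)"
    using assms by (auto simp: differentiable_def)
  have "((\<lambda>Y. Y $ i) has_derivative (\<lambda>Y. Y $ i)) (at X)"
    by (rule bounded_linear_imp_has_derivative[OF bounded_linear_vec_nth])
  from partial_eq_derivative[OF has_derivative_mult[OF this f]] show ?thesis
    by (simp add: partial_eq_derivative[OF f])
qed

lemma jacobian4_quaternion_product: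
  assumes \<Phi>: "\<And>Y. (\<Phi> Y $ 1, \<Phi> Y $ 2, \<Phi> Y $ 3, \<Phi> Y $ 4)
                 = qmult (Y $ 1, Y $ 2, Y $ 3, Y $ 4) (u Y, v Y, p Y, q Y)"
    and "u differentiable at X" "v differentiable at X"
    and "p differentiable at X" "q differentiable at X"
  shows "jacobian4 \<Phi> X $ 1 $ j =
           (X$1 * partial u j X + axis j 1 $ 1 * u X) - (X$2 * partial v j X + axis j 1 $ 2 * v X)
         - (X$3 * partial p j X + axis j 1 $ 3 * p X) - (X$4 * partial q j X + axis j 1 $ 4 * q X)"
    and "jacobian4 \<Phi> X $ 2 $ j =
           (X$1 * partial v j X + axis j 1 $ 1 * v X) + (X$2 * partial u j X + axis j 1 $ 2 * u X)
         + (X$3 * partial q j X + axis j 1 $ 3 * q X) - (X$4 * partial p j X + axis j 1 $ 4 * p X)"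
    and "jacobian4 \<Phi> X $ 3 $ j =
           (X$1 * partial p j X + axis j 1 $ 1 * p X) - (X$2 * partial q j X + axis j 1 $ 2 * q X)
         + (X$3 * partial u j X + axis j 1 $ 3 * u X) + (X$4 * partial v j X + axis j 1 $ 4 * v X)"
    and "jacobian4 \<Phi> X $ 4 $ j =
           (X$1 * partial q j X + axis j 1 $ 1 * q X) + (X$2 * partial p j X + axis j 1 $ 2 * p X)
         - (X$3 * partial v j X + axis j 1 $ 3 * v X) + (X$4 * partial u j X + axis j 1 $ 4 * u X)"
  using \<Phi>[unfolded qmult_def prod.case prod.inject] assms(2-5) unfolding jacobian4_def
  by (simp_all add: partial_add partial_diff partial_component_mult
      differentiable_add differentiable_diff differentiable_mult differentiable_component)

lemma hom_poly4_differentiable: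
  assumes "hom_poly4 m f"
  shows "f differentiable at X"
proof -
  obtain coef where "\<And>P. f P = (\<Sum>a\<le>m. \<Sum>b\<le>m. \<Sum>c\<le>m. \<Sum>d\<le>m.
        if a + b + c + d = m
        then coef a b c d * xc P ^ a * yc P ^ b * zc P ^ c * wc P ^ d else 0)"
    using assms unfolding hom_poly4_def by blast
  then have "f = (\<lambda>P. \<Sum>a\<le>m. \<Sum>b\<le>m. \<Sum>c\<le>m. \<Sum>d\<le>m.
        of_bool (a + b + c + d = m) * coef a b c d * P$1 ^ a * P$2 ^ b * P$3 ^ c * P$4 ^ d)"
    by (auto simp: fun_eq_iff xc_def yc_def zc_def wc_def intro!: sum.cong)
  then show ?thesis
    by (auto intro!: differentiable_sum differentiable_mult differentiable_power
        differentiable_component)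
qed

lemma hom_poly4_scaleR:
  assumes "hom_poly4 m f"
  shows "f (s *\<^sub>R X) = s ^ m * f X"
proof -
  obtain coef where f: "\<And>P. f P = (\<Sum>a\<le>m. \<Sum>b\<le>m. \<Sum>c\<le>m. \<Sum>d\<le>m.
        if a + b + c + d = m
        then coef a b c d * xc P ^ a * yc P ^ b * zc P ^ c * wc P ^ d else 0)"
    using assms unfolding hom_poly4_def by blast
  have "f (s *\<^sub>R X) = (\<Sum>a\<le>m. \<Sum>b\<le>m. \<Sum>c\<le>m. \<Sum>d\<le>m. s ^ m *
      (if a + b + c + d = m then coef a b c d * xc X ^ a * yc X ^ b * zc X ^ c * wc X ^ d else 0))"
    unfolding f
  proof (intro sum.cong refl)
    fix a b c d
    show "(if a + b + c + d = m then coef a b c d * xc (s *\<^sub>R X) ^ a * yc (s *\<^sub>R X) ^ b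
             * zc (s *\<^sub>R X) ^ c * wc (s *\<^sub>R X) ^ d else 0)
        = s ^ m * (if a + b + c + d = m then coef a b c d * xc X ^ a * yc X ^ b * zc X ^ c
             * wc X ^ d else 0)"
      by (cases "a + b + c + d = m")
        (auto simp: xc_def yc_def zc_def wc_def power_mult_distrib power_add mult_ac)
  qed
  then show ?thesis
    unfolding f by (simp add: sum_distrib_left)
qed

lemma euler_homogeneous:
  fixes f :: "'a::real_normed_vector \<Rightarrow> real"
  assumes hom: "\<And>s. f (s *\<^sub>R X) = s ^ m * f X" and f: "(f has_derivative D) (at X)"
  shows "D X = real m * f X"
proof -
  have "((\<lambda>s. s *\<^sub>R X) has_derivative (\<lambda>s. s *\<^sub>R X)) (at 1)"
    by (auto intro!: derivative_eq_intros)
  moreover have "(f has_derivative D) (at (1 *\<^sub>R X))"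
    using f by simp
  ultimately have "((f \<circ> (\<lambda>s. s *\<^sub>R X)) has_derivative (D \<circ> (\<lambda>s. s *\<^sub>R X)))
      (at 1)"
    by (rule diff_chain_at)
  moreover have "D \<circ> (\<lambda>s. s *\<^sub>R X) = (\<lambda>s. D X * s)"
    using has_derivative_bounded_linear[OF f]
    by (auto simp: fun_eq_iff linear_simps(5) bounded_linear.linear)
  ultimately have "((\<lambda>s. s ^ m * f X) has_field_derivative D X) (at 1)"
    by (simp add: has_field_derivative_def o_def hom)
  moreover have "((\<lambda>s. s ^ m * f X) has_field_derivative real m * f X) (at 1)"
    by (auto intro!: derivative_eq_intros)
  ultimately show ?thesis
    by (rule DERIV_unique)
qed

lemma hom_poly4_euler:
  assumes "hom_poly4 m f"
  shows "(\<Sum>j\<in>UNIV. X $ j * partial f j X) = real m * f X"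
proof -
  obtain D where D: "(f has_derivative D) (at X)"
    using hom_poly4_differentiable[OF assms] by (auto simp: differentiable_def)
  then have "linear D"
    by (simp add: has_derivative_linear)
  have "D X = D (\<Sum>j\<in>UNIV. X $ j *\<^sub>R axis j 1)"
    using basis_expansion[of X] by (simp add: scalar_mult_eq_scaleR)
  also have "\<dots> = (\<Sum>j\<in>UNIV. X $ j * D (axis j 1))"
    using \<open>linear D\<close> by (simp add: linear_sum linear_scale o_def)
  also have "\<dots> = (\<Sum>j\<in>UNIV. X $ j * partial f j X)"
    by (simp add: partial_eq_derivative[OF D])
  finally show ?thesis
    using euler_homogeneous[OF hom_poly4_scaleR[OF assms] D] by simp
qed

theorem corollary3p1:
  fixes m :: nat and u v p q :: "real^4 \<Rightarrow> real"
    and U V P Q :: "real^4 \<Rightarrow> real" and \<Phi> :: "real^4 \<Rightarrow> real^4"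
  assumes "m \<ge> 1"
    and "hom_poly4 m u" and "hom_poly4 m v" and "hom_poly4 m p" and "hom_poly4 m q"
    and "\<And>X. yc X * p X = zc X * v X"
    and "\<And>X. yc X * q X = wc X * v X"
    and "\<And>X. (U X, V X, P X, Q X) = qmult (xc X, yc X, zc X, wc X) (u X, v X, p X, q X)"
    and "\<And>X. \<Phi> X $ 1 = U X" and "\<And>X. \<Phi> X $ 2 = V X"
    and "\<And>X. \<Phi> X $ 3 = P X" and "\<And>X. \<Phi> X $ 4 = Q X"
    and "yc X0 \<noteq> 0"
  shows "det (jacobian4 \<Phi> X0) =
    (real m + 1) * (V X0)^2 *
      (yc X0 * ((xc X0)^2 + (yc X0)^2 + (zc X0)^2 + (wc X0)^2)
          * (v X0 * partial u 1 X0 - u X0 * partial v 1 X0)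
       + (yc X0)^2 * (u X0)^2
       + (v X0)^2 * ((yc X0)^2 + (zc X0)^2 + (wc X0)^2)) / (yc X0)^4"
proof -
  note coordinates = xc_def yc_def zc_def wc_def
  have diff: "u differentiable at X0" "v differentiable at X0"
    "p differentiable at X0" "q differentiable at X0"
    using assms(2-5) by (simp_all add: hom_poly4_differentiable)
  have \<Phi>: "\<And>Y. (\<Phi> Y $ 1, \<Phi> Y $ 2, \<Phi> Y $ 3, \<Phi> Y $ 4)
               = qmult (Y $ 1, Y $ 2, Y $ 3, Y $ 4) (u Y, v Y, p Y, q Y)"
    using assms(8-12) by (simp add: coordinates)
  have pv: "X0$2 * p X0 = X0$3 * v X0" and qv: "X0$2 * q X0 = X0$4 * v X0"
    using assms(6,7) by (simp_all add: coordinates)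
  have "\<And>j. partial (\<lambda>Y. Y$2 * p Y) j X0 = partial (\<lambda>Y. Y$3 * v Y) j X0"
       "\<And>j. partial (\<lambda>Y. Y$2 * q Y) j X0 = partial (\<lambda>Y. Y$4 * v Y) j X0"
    using assms(6,7) by (simp_all add: coordinates)
  then have dpv: "\<And>j. X0$2 * partial p j X0 + axis j 1 $ 2 * p X0
                      = X0$3 * partial v j X0 + axis j 1 $ 3 * v X0"
        and dqv: "\<And>j. X0$2 * partial q j X0 + axis j 1 $ 2 * q X0
                      = X0$4 * partial v j X0 + axis j 1 $ 4 * v X0"
    by (simp_all add: partial_component_mult diff)
  have V: "V X0 = X0$1 * v X0 + X0$2 * u X0 + X0$3 * q X0 - X0$4 * p X0"
    using assms(8)[of X0] by (simp add: qmult_def coordinates)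
  from det_quaternion_product_jacobian[OF assms(13)[unfolded yc_def] pv qv dpv dqv
      hom_poly4_euler[OF assms(2), of X0, unfolded sum_4]
      hom_poly4_euler[OF assms(3), of X0, unfolded sum_4]
      jacobian4_quaternion_product[OF \<Phi> diff]]
  show ?thesis
    unfolding V coordinates .
qed

end
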